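(* Let $X$ be a graph with Hamiltonian $M\in\{A,L,Q\}$, let $s\in\mathbb{R}\setminus\{0\}$, and suppose the $s$-pair states $\mathbf u=\mathbf e_a+s\mathbf e_b$ and $\boldsymbol\mu=\mathbf e_\alpha+s\mathbf e_\beta$ are strongly cospectral with respect to $M$. If $s\neq1$, then every automorphism of $X$ that fixes $a$ and fixes $b$ also fixes $\alpha$ and fixes $\beta$. If $s=1$, then every automorphism of $X$ that fixes the set $\{a,b\}$ also fixes the set $\{\alpha,\beta\}$.
   Context: $A$, $L=D-A$, $Q=D+A$ are the adjacency, Laplacian, signless Laplacian matrices. An $s$-pair state is $\mathbf e_a+s\mathbf e_b$ with $a\neq b$ vertices. For $M=\sum_\lambda\lambda E_\lambda$ (orthogonal spectral projections), real vectors $\mathbf u,\boldsymbol\mu$ are strongly cospectral if $E_\lambda\mathbf u=\pm E_\lambda\boldsymbol\mu$ for every eigenvalue $\lambda$. *)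

theory Defs
  imports "HOL-Analysis.Analysis"
begin

definition simple_graph :: "('v::finite \<Rightarrow> 'v \<Rightarrow> bool) \<Rightarrow> bool" where
  "simple_graph E \<longleftrightarrow> (\<forall>x y. E x y \<longleftrightarrow> E y x) \<and> (\<forall>x. \<not> E x x)"

definition graph_aut :: "('v \<Rightarrow> 'v \<Rightarrow> bool) \<Rightarrow> ('v \<Rightarrow> 'v) \<Rightarrow> bool" where
  "graph_aut E \<sigma> \<longleftrightarrow> bij \<sigma> \<and> (\<forall>x y. E (\<sigma> x) (\<sigma> y) \<longleftrightarrow> E x y)"

definition degree :: "('v::finite \<Rightarrow> 'v \<Rightarrow> bool) \<Rightarrow> 'v \<Rightarrow> real" where
  "degree E x = real (card {y. E x y})"

definition adj_mat :: "('v::finite \<Rightarrow> 'v \<Rightarrow> bool) \<Rightarrow> real^'v^'v" where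
  "adj_mat E = (\<chi> i j. if E i j then 1 else 0)"

definition deg_mat :: "('v::finite \<Rightarrow> 'v \<Rightarrow> bool) \<Rightarrow> real^'v^'v" where
  "deg_mat E = (\<chi> i j. if i = j then degree E i else 0)"

definition lap_mat :: "('v::finite \<Rightarrow> 'v \<Rightarrow> bool) \<Rightarrow> real^'v^'v" where
  "lap_mat E = deg_mat E - adj_mat E"

definition slap_mat :: "('v::finite \<Rightarrow> 'v \<Rightarrow> bool) \<Rightarrow> real^'v^'v" where
  "slap_mat E = deg_mat E + adj_mat E"

definition evec :: "'v::finite \<Rightarrow> real^'v" where
  "evec a = (\<chi> j. if j = a then 1 else 0)"

definition pair_state :: "'v::finite \<Rightarrow> 'v \<Rightarrow> real \<Rightarrow> real^'v" where
  "pair_state a b s = evec a + s *\<^sub>R evec b"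

definition eig_space :: "real^'n^'n \<Rightarrow> real \<Rightarrow> (real^'n) set" where
  "eig_space M l = {x. M *v x = l *\<^sub>R x}"

definition is_eigenvalue :: "real^'n^'n \<Rightarrow> real \<Rightarrow> bool" where
  "is_eigenvalue M l \<longleftrightarrow> (\<exists>x. x \<noteq> 0 \<and> M *v x = l *\<^sub>R x)"

definition eig_proj :: "real^'n^'n \<Rightarrow> real \<Rightarrow> real^'n \<Rightarrow> real^'n" where
  "eig_proj M l u = (THE p. p \<in> eig_space M l \<and> (\<forall>w \<in> eig_space M l. (u - p) \<bullet> w = 0))"

definition strongly_cospectral :: "real^'n^'n \<Rightarrow> real^'n \<Rightarrow> real^'n \<Rightarrow> bool" where
  "strongly_cospectral M u v \<longleftrightarrow>
     (\<forall>l. is_eigenvalue M l \<longrightarrow> eig_proj M l u = eig_proj M l v \<or> eig_proj M l u = - eig_proj M l v)"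

end

theory Submission
  imports Defs
begin

text \<open>An automorphism \<sigma> commutes with M, hence with every spectral projection E_\<lambda>. If \<sigma> fixes u,
  it fixes each E_\<lambda> u = \<plusminus>E_\<lambda> \<mu>, so \<sigma>\<mu> and \<mu> have the same projections; as M is symmetric
  its eigenspaces span the whole space, whence \<sigma> fixes \<mu>. Finally, \<sigma> fixes e_\<alpha> + s e_\<beta> iff it
  fixes \<alpha> and \<beta> when s \<noteq> 1, and iff it fixes {\<alpha>, \<beta>} when s = 1.\<close>

lemma subspace_eig_space: "subspace (eig_space M l)"
  unfolding subspace_def eig_space_def
  by (auto simp: matrix_vector_right_distrib matrix_vector_mult_scaleR scaleR_right_distrib)

lemma ex1_orthogonal_projection_eig_space:
  "\<exists>!p. p \<in> eig_space M l \<and> (\<forall>w \<in> eig_space M l. (u - p) \<bullet> w = 0)"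
proof -
  have span: "span (eig_space M l) = eig_space M l"
    using subspace_eig_space span_eq_iff by blast
  obtain y z where y: "y \<in> eig_space M l" and z: "\<And>w. w \<in> eig_space M l \<Longrightarrow> orthogonal z w"
    and u: "u = y + z"
    using orthogonal_subspace_decomp_exists[of "eig_space M l" u] unfolding span by blast
  show ?thesis
  proof (rule ex1I[of _ y])
    show "y \<in> eig_space M l \<and> (\<forall>w \<in> eig_space M l. (u - y) \<bullet> w = 0)"
      using y z u by (auto simp: orthogonal_def)
  next
    fix p assume p: "p \<in> eig_space M l \<and> (\<forall>w \<in> eig_space M l. (u - p) \<bullet> w = 0)"
    have "y - p \<in> eig_space M l"
      using p y subspace_eig_space subspace_diff by blast
    then have "(u - p) \<bullet> (y - p) = 0" "(u - y) \<bullet> (y - p) = 0"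
      using p z u by (auto simp: orthogonal_def)
    then have "(y - p) \<bullet> (y - p) = 0" by (simp add: inner_diff_left)
    then show "p = y" by simp
  qed
qed

lemma eig_proj_in_eig_space: "eig_proj M l u \<in> eig_space M l"
  using theI'[OF ex1_orthogonal_projection_eig_space] unfolding eig_proj_def by blast

lemma eig_proj_orthogonal: "w \<in> eig_space M l \<Longrightarrow> (u - eig_proj M l u) \<bullet> w = 0"
  using theI'[OF ex1_orthogonal_projection_eig_space] unfolding eig_proj_def by blast

lemma eig_proj_unique:
  assumes "p \<in> eig_space M l" "\<And>w. w \<in> eig_space M l \<Longrightarrow> (u - p) \<bullet> w = 0"
  shows "eig_proj M l u = p"
  unfolding eig_proj_def using assms by (intro the1_equality ex1_orthogonal_projection_eig_space) auto

lemma inner_matrix_vector_symmetric: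
  fixes M :: "real^'n^'n"
  assumes "transpose M = M"
  shows "(M *v x) \<bullet> y = x \<bullet> (M *v y)"
  by (metis assms dot_lmul_matrix transpose_matrix_vector)

lemma linear_coeff_eq_0_if_quadratic_nonpos:
  fixes c d :: real
  assumes "\<And>t. 2 * t * c + t\<^sup>2 * d \<le> 0"
  shows "c = 0"
proof -
  define e where "e = \<bar>d\<bar> + 1"
  have e: "e > 0" "2 * e + d > 0" unfolding e_def by (auto simp: abs_if)
  have "(2 * (c / e) * c + (c / e)\<^sup>2 * d) * e\<^sup>2 \<le> 0"
    using assms[of "c / e"] by (simp add: mult_nonpos_nonneg)
  also have "(2 * (c / e) * c + (c / e)\<^sup>2 * d) * e\<^sup>2 = c\<^sup>2 * (2 * e + d)"
    using e by (simp add: field_simps power2_eq_square)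
  finally have "c\<^sup>2 \<le> 0" using e by (simp add: mult_le_0_iff)
  then show ?thesis by simp
qed

text \<open>The quadratic form x \<bullet> M x - l (x \<bullet> x) is \<le> 0 on S and vanishes at x0, so its first
  variation 2 (M x0 - l x0) \<bullet> y vanishes in every direction y \<in> S; take y = M x0 - l x0.\<close>

lemma rayleigh_maximiser_is_eigenvector:
  fixes M :: "real^'n^'n"
  assumes sym: "transpose M = M" and S: "subspace S" and inv: "\<And>x. x \<in> S \<Longrightarrow> M *v x \<in> S"
    and x0: "x0 \<in> S" and le: "\<And>x. x \<in> S \<Longrightarrow> x \<bullet> (M *v x) \<le> l * (x \<bullet> x)"
    and eq: "x0 \<bullet> (M *v x0) = l * (x0 \<bullet> x0)"
  shows "M *v x0 = l *\<^sub>R x0"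
proof -
  define y where "y = M *v x0 - l *\<^sub>R x0"
  have yS: "y \<in> S" unfolding y_def using inv x0 S by (simp add: subspace_diff subspace_scale)
  have sym': "x0 \<bullet> (M *v y) = y \<bullet> (M *v x0)"
    using inner_matrix_vector_symmetric[OF sym, of y x0] by (simp add: inner_commute)
  have yy: "y \<bullet> y = y \<bullet> (M *v x0) - l * (y \<bullet> x0)"
    unfolding y_def by (simp add: inner_diff_right)
  have "2 * t * (y \<bullet> y) + t\<^sup>2 * (y \<bullet> (M *v y) - l * (y \<bullet> y)) \<le> 0" for t
  proof -
    have ty: "t * (y \<bullet> y) = t * (y \<bullet> (M *v x0)) - l * (t * (y \<bullet> x0))"
      unfolding yy by (simp add: algebra_simps)
    have "x0 + t *\<^sub>R y \<in> S" using x0 yS S by (simp add: subspace_add subspace_scale)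
    then have "(x0 + t *\<^sub>R y) \<bullet> (M *v (x0 + t *\<^sub>R y)) \<le> l * ((x0 + t *\<^sub>R y) \<bullet> (x0 + t *\<^sub>R y))"
      by (rule le)
    also have "(x0 + t *\<^sub>R y) \<bullet> (M *v (x0 + t *\<^sub>R y))
        = x0 \<bullet> (M *v x0) + 2 * t * (y \<bullet> (M *v x0)) + t\<^sup>2 * (y \<bullet> (M *v y))"
      using sym' by (simp add: matrix_vector_right_distrib matrix_vector_mult_scaleR inner_add_left
          inner_add_right power2_eq_square distrib_left)
    also have "(x0 + t *\<^sub>R y) \<bullet> (x0 + t *\<^sub>R y) = x0 \<bullet> x0 + 2 * t * (y \<bullet> x0) + t\<^sup>2 * (y \<bullet> y)"
      by (simp add: inner_add_left inner_add_right inner_commute power2_eq_square)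
    finally show ?thesis using eq ty by (simp add: algebra_simps)
  qed
  then have "y \<bullet> y = 0" by (rule linear_coeff_eq_0_if_quadratic_nonpos)
  then show ?thesis unfolding y_def by simp
qed

lemma rayleigh_quotient_attains_max:
  fixes M :: "real^'n^'n"
  assumes S: "subspace S" and nontriv: "S \<noteq> {0}"
  obtains x0 where "x0 \<in> S" "norm x0 = 1" "\<And>x. x \<in> S \<Longrightarrow> x \<bullet> (M *v x) \<le> (x0 \<bullet> (M *v x0)) * (x \<bullet> x)"
proof -
  define f where "f x = x \<bullet> (M *v x)" for x :: "real^'n"
  define K where "K = S \<inter> sphere 0 1"
  have normalize: "(1 / norm x) *\<^sub>R x \<in> K" if "x \<in> S" "x \<noteq> 0" for x
    using that S unfolding K_def by (simp add: subspace_scale)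
  have compact: "compact K"
    unfolding K_def using S by (simp add: closed_Int_compact closed_subspace)
  obtain z where "z \<in> S" "z \<noteq> 0" using nontriv subspace_0[OF S] by blast
  then have nonempty: "K \<noteq> {}" using normalize by blast
  have cont: "continuous_on K f" unfolding f_def
    by (intro continuous_intros linear_continuous_on matrix_vector_mul_linear)
  obtain x0 where x0: "x0 \<in> K" and max: "\<And>x. x \<in> K \<Longrightarrow> f x \<le> f x0"
    using continuous_attains_sup[OF compact nonempty cont] by blast
  have le: "f x \<le> f x0 * (x \<bullet> x)" if x: "x \<in> S" for x
  proof (cases "x = 0")
    case False
    have "f ((1 / norm x) *\<^sub>R x) = f x / (x \<bullet> x)"
      unfolding f_def by (simp add: matrix_vector_mult_scaleR dot_square_norm power2_eq_square)
    moreover have "f ((1 / norm x) *\<^sub>R x) \<le> f x0" using normalize[OF x False] by (rule max)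
    moreover have "x \<bullet> x > 0" using False by simp
    ultimately show ?thesis by (simp add: divide_le_eq)
  qed (simp add: f_def)
  have "x0 \<in> S" "norm x0 = 1" using x0 unfolding K_def by auto
  then show ?thesis using le unfolding f_def by (rule that)
qed

lemma symmetric_invariant_subspace_has_eigenvector:
  fixes M :: "real^'n^'n"
  assumes "transpose M = M" "subspace S" "\<And>x. x \<in> S \<Longrightarrow> M *v x \<in> S" "S \<noteq> {0}"
  obtains x l where "x \<in> S" "x \<noteq> 0" "M *v x = l *\<^sub>R x"
proof -
  obtain x0 where x0: "x0 \<in> S" "norm x0 = 1"
    and max: "\<And>x. x \<in> S \<Longrightarrow> x \<bullet> (M *v x) \<le> (x0 \<bullet> (M *v x0)) * (x \<bullet> x)"
    using rayleigh_quotient_attains_max[OF assms(2,4)] by blast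
  have "x0 \<bullet> x0 = 1" using x0(2) by (simp add: dot_square_norm)
  then have "M *v x0 = (x0 \<bullet> (M *v x0)) *\<^sub>R x0"
    using rayleigh_maximiser_is_eigenvector[OF assms(1-3) x0(1) max] by simp
  then show ?thesis using that x0 by force
qed

lemma orthogonal_to_eig_spaces_eq_0:
  fixes M :: "real^'n^'n"
  assumes sym: "transpose M = M" and orth: "\<And>l w. w \<in> eig_space M l \<Longrightarrow> z \<bullet> w = 0"
  shows "z = 0"
proof (rule ccontr)
  assume "z \<noteq> 0"
  define S where "S = {x. \<forall>l. \<forall>w \<in> eig_space M l. x \<bullet> w = 0}"
  have S: "subspace S" unfolding subspace_def S_def by (simp add: inner_add_left)
  have inv: "M *v x \<in> S" if "x \<in> S" for x
  proof -
    have "(M *v x) \<bullet> w = x \<bullet> (l *\<^sub>R w)" if "w \<in> eig_space M l" for l w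
      using that unfolding eig_space_def by (simp add: inner_matrix_vector_symmetric[OF sym])
    then show ?thesis using \<open>x \<in> S\<close> unfolding S_def by simp
  qed
  have "z \<in> S" using orth unfolding S_def by blast
  with \<open>z \<noteq> 0\<close> have "S \<noteq> {0}" by blast
  then obtain x l where "x \<in> S" "x \<noteq> 0" "M *v x = l *\<^sub>R x"
    using symmetric_invariant_subspace_has_eigenvector[OF sym S inv] by blast
  then have "x \<bullet> x = 0" unfolding S_def eig_space_def by blast
  with \<open>x \<noteq> 0\<close> show False by simp
qed

lemma eig_projs_determine_vector:
  fixes M :: "real^'n^'n"
  assumes "transpose M = M" "\<And>l. is_eigenvalue M l \<Longrightarrow> eig_proj M l x = eig_proj M l y"
  shows "x = y"
proof -
  have "(x - y) \<bullet> w = 0" if w: "w \<in> eig_space M l" for l w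
  proof (cases "is_eigenvalue M l")
    case True
    have "(x - y) \<bullet> w = (x - eig_proj M l x) \<bullet> w - (y - eig_proj M l y) \<bullet> w"
      using assms(2)[OF True] by (simp add: inner_diff_left)
    then show ?thesis using eig_proj_orthogonal[OF w] by simp
  next
    case False
    then have "w = 0" using w unfolding is_eigenvalue_def eig_space_def by blast
    then show ?thesis by simp
  qed
  then show ?thesis using orthogonal_to_eig_spaces_eq_0[OF assms(1)] by force
qed

definition vec_permute :: "('v::finite \<Rightarrow> 'v) \<Rightarrow> real^'v \<Rightarrow> real^'v" where
  "vec_permute \<sigma> x = (\<chi> i. x $ \<sigma> i)"

lemma vec_permute_minus: "vec_permute \<sigma> (- x) = - vec_permute \<sigma> x"
  by (simp add: vec_permute_def vec_eq_iff)

lemma vec_permute_diff: "vec_permute \<sigma> (x - y) = vec_permute \<sigma> x - vec_permute \<sigma> y"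
  by (simp add: vec_permute_def vec_eq_iff)

lemma vec_permute_inv_cancel: "bij \<sigma> \<Longrightarrow> vec_permute \<sigma> (vec_permute (inv \<sigma>) x) = x"
  by (simp add: vec_permute_def vec_eq_iff bij_is_inj)

lemma inner_vec_permute: "bij \<sigma> \<Longrightarrow> vec_permute \<sigma> x \<bullet> vec_permute \<sigma> y = x \<bullet> y"
  using sum.reindex[of \<sigma> UNIV "\<lambda>i. x $ i * y $ i"]
  by (simp add: inner_vec_def vec_permute_def bij_def)

lemma matrix_vector_mult_vec_permute:
  assumes "bij \<sigma>" "\<And>i j. M $ \<sigma> i $ \<sigma> j = M $ i $ j"
  shows "M *v vec_permute \<sigma> x = vec_permute \<sigma> (M *v x)"
proof -
  have "(\<Sum>j\<in>UNIV. M $ \<sigma> i $ j * x $ j) = (\<Sum>j\<in>UNIV. M $ \<sigma> i $ \<sigma> j * x $ \<sigma> j)" for i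
    using sum.reindex[of \<sigma> UNIV "\<lambda>j. M $ \<sigma> i $ j * x $ j"] assms(1) by (simp add: bij_def)
  then show ?thesis using assms(2) by (simp add: vec_eq_iff vec_permute_def matrix_vector_mult_def)
qed

lemma matrix_invariant_inv:
  assumes "bij \<sigma>" "\<And>i j. M $ \<sigma> i $ \<sigma> j = M $ i $ j"
  shows "M $ inv \<sigma> i $ inv \<sigma> j = M $ i $ j"
  using assms(2)[of "inv \<sigma> i" "inv \<sigma> j"] by (simp add: surj_f_inv_f[OF bij_is_surj[OF assms(1)]])

lemma eig_proj_vec_permute:
  assumes \<sigma>: "bij \<sigma>" "\<And>i j. M $ \<sigma> i $ \<sigma> j = M $ i $ j"
  shows "eig_proj M l (vec_permute \<sigma> x) = vec_permute \<sigma> (eig_proj M l x)"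
proof (rule eig_proj_unique)
  have comm: "M *v vec_permute \<tau> y = vec_permute \<tau> (M *v y)" if "\<tau> \<in> {\<sigma>, inv \<sigma>}" for \<tau> y
    using that matrix_vector_mult_vec_permute[OF \<sigma>] bij_imp_bij_inv[OF \<sigma>(1)]
      matrix_vector_mult_vec_permute[OF _ matrix_invariant_inv[OF \<sigma>]] by auto
  have permute_eig: "vec_permute \<tau> y \<in> eig_space M l" if "\<tau> \<in> {\<sigma>, inv \<sigma>}" "y \<in> eig_space M l" for \<tau> y
    using that comm[of \<tau>] by (simp add: eig_space_def vec_permute_def vec_eq_iff)
  show "vec_permute \<sigma> (eig_proj M l x) \<in> eig_space M l"
    using permute_eig eig_proj_in_eig_space by blast
  fix w assume w: "w \<in> eig_space M l"
  have "(vec_permute \<sigma> x - vec_permute \<sigma> (eig_proj M l x)) \<bullet> w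
      = vec_permute \<sigma> (x - eig_proj M l x) \<bullet> vec_permute \<sigma> (vec_permute (inv \<sigma>) w)"
    by (simp add: vec_permute_diff vec_permute_inv_cancel[OF \<sigma>(1)])
  also have "\<dots> = (x - eig_proj M l x) \<bullet> vec_permute (inv \<sigma>) w"
    by (rule inner_vec_permute[OF \<sigma>(1)])
  also have "\<dots> = 0" using eig_proj_orthogonal permute_eig w by blast
  finally show "(vec_permute \<sigma> x - vec_permute \<sigma> (eig_proj M l x)) \<bullet> w = 0" .
qed

lemma strongly_cospectral_fixed_transfer:
  fixes M :: "real^'v::finite^'v"
  assumes "transpose M = M" "bij \<sigma>" "\<And>i j. M $ \<sigma> i $ \<sigma> j = M $ i $ j"
    and sc: "strongly_cospectral M u v" and fix_u: "vec_permute \<sigma> u = u"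
  shows "vec_permute \<sigma> v = v"
proof (rule eig_projs_determine_vector[OF assms(1)])
  fix l assume "is_eigenvalue M l"
  then have "eig_proj M l v = eig_proj M l u \<or> eig_proj M l v = - eig_proj M l u"
    using sc unfolding strongly_cospectral_def by force
  moreover have "vec_permute \<sigma> (eig_proj M l u) = eig_proj M l u"
    using eig_proj_vec_permute[OF assms(2,3)] fix_u by metis
  ultimately show "eig_proj M l (vec_permute \<sigma> v) = eig_proj M l v"
    using eig_proj_vec_permute[OF assms(2,3)] vec_permute_minus by metis
qed

lemma graph_aut_inv: "graph_aut E \<sigma> \<Longrightarrow> graph_aut E (inv \<sigma>)"
  unfolding graph_aut_def by (metis bij_imp_bij_inv bij_inv_eq_iff)

lemma degree_graph_aut:
  assumes "graph_aut E \<sigma>"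
  shows "degree E (\<sigma> x) = degree E x"
proof -
  have b: "bij \<sigma>" using assms graph_aut_def by blast
  have "{y. E (\<sigma> x) y} = \<sigma> ` {y. E x y}"
  proof safe
    fix y assume "E (\<sigma> x) y"
    moreover obtain z where "y = \<sigma> z" using b by (metis bij_pointE)
    ultimately show "y \<in> \<sigma> ` {y. E x y}" using assms unfolding graph_aut_def by auto
  qed (use assms in \<open>auto simp: graph_aut_def\<close>)
  then show ?thesis unfolding degree_def using b
    by (metis bij_is_inj card_image inj_on_subset subset_UNIV)
qed

lemma hamiltonian_graph_aut:
  assumes "M \<in> {adj_mat E, lap_mat E, slap_mat E}" "graph_aut E \<sigma>"
  shows "M $ \<sigma> i $ \<sigma> j = M $ i $ j"
proof -
  have "bij \<sigma>" using assms graph_aut_def by blast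
  then have "deg_mat E $ \<sigma> i $ \<sigma> j = deg_mat E $ i $ j"
    using degree_graph_aut[OF assms(2)] by (simp add: deg_mat_def bij_is_inj inj_eq)
  moreover have "adj_mat E $ \<sigma> i $ \<sigma> j = adj_mat E $ i $ j"
    using assms(2) by (simp add: adj_mat_def graph_aut_def)
  ultimately show ?thesis using assms(1) by (auto simp: lap_mat_def slap_mat_def)
qed

lemma hamiltonian_symmetric:
  assumes "simple_graph E" "M \<in> {adj_mat E, lap_mat E, slap_mat E}"
  shows "transpose M = M"
proof -
  have "adj_mat E $ i $ j = adj_mat E $ j $ i" "deg_mat E $ i $ j = deg_mat E $ j $ i" for i j
    using assms(1) by (auto simp: adj_mat_def deg_mat_def simple_graph_def)
  then show ?thesis
    using assms(2) by (auto simp: vec_eq_iff transpose_def lap_mat_def slap_mat_def)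
qed

lemma vec_permute_inv_pair_state:
  assumes "bij \<sigma>"
  shows "vec_permute (inv \<sigma>) (pair_state a b s) = pair_state (\<sigma> a) (\<sigma> b) s"
proof -
  have "inv \<sigma> i = x \<longleftrightarrow> i = \<sigma> x" for i x
    using assms by (metis bij_inv_eq_iff)
  then show ?thesis by (simp add: vec_eq_iff vec_permute_def pair_state_def evec_def)
qed

lemma pair_state_eq_iff:
  assumes "a \<noteq> b" "c \<noteq> d" "s \<noteq> 0"
  shows "pair_state a b s = pair_state c d s \<longleftrightarrow> (a = c \<and> b = d) \<or> (s = 1 \<and> a = d \<and> b = c)"
proof
  assume eq: "pair_state a b s = pair_state c d s"
  have at: "(if i = a then 1 else 0) + s * (if i = b then 1 else 0)
      = (if i = c then 1 else 0) + s * (if i = d then 1 else 0)" for i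
    using arg_cong[OF eq, of "\<lambda>x. x $ i"] by (simp add: pair_state_def evec_def)
  show "(a = c \<and> b = d) \<or> (s = 1 \<and> a = d \<and> b = c)"
    using at[of a] at[of b] assms by (cases "a = c"; cases "a = d"; cases "b = c"; cases "b = d"; simp)
qed (auto simp: pair_state_def)

lemma cospectral_pair_state_fixed_by_aut:
  fixes M :: "real^'v::finite^'v"
  assumes "simple_graph E" "M \<in> {adj_mat E, lap_mat E, slap_mat E}"
    and "strongly_cospectral M (pair_state a b s) (pair_state \<alpha> \<beta> s)"
    and aut: "graph_aut E \<sigma>" and "pair_state (\<sigma> a) (\<sigma> b) s = pair_state a b s"
  shows "pair_state (\<sigma> \<alpha>) (\<sigma> \<beta>) s = pair_state \<alpha> \<beta> s"
proof -
  have "bij \<sigma>" "bij (inv \<sigma>)" using aut graph_aut_inv graph_aut_def by blast+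
  then show ?thesis
    using strongly_cospectral_fixed_transfer[OF hamiltonian_symmetric[OF assms(1,2)]
        \<open>bij (inv \<sigma>)\<close> hamiltonian_graph_aut[OF assms(2) graph_aut_inv[OF aut]] assms(3)]
      assms(5) vec_permute_inv_pair_state by metis
qed

theorem mainTheorem5:
  fixes E :: "'v::finite \<Rightarrow> 'v \<Rightarrow> bool" and M :: "real^'v^'v"
    and a b \<alpha> \<beta> :: 'v and s :: real
  assumes "simple_graph E"
    and "M \<in> {adj_mat E, lap_mat E, slap_mat E}"
    and "s \<noteq> 0" and "a \<noteq> b" and "\<alpha> \<noteq> \<beta>"
    and "strongly_cospectral M (pair_state a b s) (pair_state \<alpha> \<beta> s)"
  shows "(s \<noteq> 1 \<longrightarrow> (\<forall>\<sigma>. graph_aut E \<sigma> \<and> \<sigma> a = a \<and> \<sigma> b = b \<longrightarrow> \<sigma> \<alpha> = \<alpha> \<and> \<sigma> \<beta> = \<beta>))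
       \<and> (s = 1 \<longrightarrow> (\<forall>\<sigma>. graph_aut E \<sigma> \<and> \<sigma> ` {a, b} = {a, b} \<longrightarrow> \<sigma> ` {\<alpha>, \<beta>} = {\<alpha>, \<beta>}))"
proof -
  note transfer = cospectral_pair_state_fixed_by_aut[OF assms(1,2,6)]
  have inj: "\<sigma> x \<noteq> \<sigma> y" if "graph_aut E \<sigma>" "x \<noteq> y" for \<sigma> x y
    using that unfolding graph_aut_def by (metis bij_is_inj inj_eq)
  have fixes_pair: "\<sigma> \<alpha> = \<alpha> \<and> \<sigma> \<beta> = \<beta>"
    if "s \<noteq> 1" and aut: "graph_aut E \<sigma>" and "\<sigma> a = a" "\<sigma> b = b" for \<sigma>
  proof -
    have "pair_state (\<sigma> \<alpha>) (\<sigma> \<beta>) s = pair_state \<alpha> \<beta> s" using transfer that by simp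
    then show ?thesis using pair_state_eq_iff[OF inj[OF aut assms(5)] assms(5,3)] that by simp
  qed
  have fixes_set: "\<sigma> ` {\<alpha>, \<beta>} = {\<alpha>, \<beta>}"
    if "s = 1" and aut: "graph_aut E \<sigma>" and "\<sigma> ` {a, b} = {a, b}" for \<sigma>
  proof -
    have "pair_state (\<sigma> a) (\<sigma> b) s = pair_state a b s"
      using pair_state_eq_iff[OF inj[OF aut assms(4)] assms(4,3)] that by (auto simp: doubleton_eq_iff)
    then have "pair_state (\<sigma> \<alpha>) (\<sigma> \<beta>) s = pair_state \<alpha> \<beta> s" using transfer aut by blast
    then show ?thesis
      using pair_state_eq_iff[OF inj[OF aut assms(5)] assms(5,3)] that by (auto simp: doubleton_eq_iff)
  qed
  show ?thesis using fixes_pair fixes_set by blast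
qed

end
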